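(* Let $G=(Q,\Sigma,\delta,\widetilde{\pi})$ be a PFSA, let $s$ denote growing prefixes of a realization generated by $G$, and let $\epsilon>0$. If $x\in\Sigma^\star$ is $\epsilon$-synchronizing, with $\|\wp_x-e^{q}\|_\infty\le\epsilon$ for the state $q\in Q$, then $$\lim_{|s|\to\infty}\|\phi^s(x)-\widetilde{\pi}(q,\cdot)\|_\infty\le\epsilon\quad\text{almost surely}.$$
   Context: $\Sigma=\{\sigma_1,\dots,\sigma_{|\Sigma|}\}$ is a finite alphabet. A PFSA has finite state set $Q=\{q_1,\dots,q_{|Q|}\}$, transition function $\delta:Q\times\Sigma\to Q$, and symbol probabilities $\widetilde{\pi}:Q\times\Sigma\to[0,1]$ (rows summing to 1), strongly connected; $\widetilde{\pi}(q,\cdot)$ denotes the distribution $(\widetilde{\pi}(q,\sigma_1),\dots,\widetilde{\pi}(q,\sigma_{|\Sigma|}))$. The transformation matrices $\Gamma_\sigma\in[0,1]^{|Q|\times|Q|}$ have $(\Gamma_\sigma)_{ij}=\widetilde{\pi}(q_i,\sigma)$ if $\delta(q_i,\sigma)=q_j$ and $0$ otherwise. Let $\wp_\lambda$ be the stationary distribution of the Markov chain on $Q$ with transition matrix $M_{ij}=\sum_{\sigma:\delta(q_i,\sigma)=q_j}\widetilde{\pi}(q_i,\sigma)$, and for $x=\sigma_{r_1}\cdots\sigma_{r_m}$ let $\wp_x=\wp_\lambda\prod_{j=1}^m\Gamma_{\sigma_{r_j}}/\|\wp_\lambda\prod_{j=1}^m\Gamma_{\sigma_{r_j}}\|_1$.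 Let $e^i$ denote the $i$-th standard basis vector in $\mathbb{R}^{|Q|}$ (the distribution concentrated on $q_i$), and $\mathcal{E}=\{e^1,\dots,e^{|Q|}\}$. A string $x$ is $\epsilon$-synchronizing if $\|\wp_x-e\|_\infty\le\epsilon$ for some $e\in\mathcal{E}$. For a string $s$, $\#^s(y)$ is the overlapping count of occurrences of the substring $y$ in $s$, and the symbolic derivative $\phi^s(x)\in\mathbb{R}^{|\Sigma|}$ is the distribution $\phi^s(x)|_i=\#^s(x\sigma_i)/\sum_j\#^s(x\sigma_j)$. *)

theory Defs
  imports "HOL-Probability.Probability"
begin

text \<open>Vectors indexed by Q
  (resp. Sigma) are functions 'q \<Rightarrow> real (resp. 'a \<Rightarrow> real);
  matrices are functions 'q \<Rightarrow> 'q \<Rightarrow> real.\<close>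

definition pfsa :: "('q::finite \<Rightarrow> 'a::finite \<Rightarrow> 'q) \<Rightarrow> ('q \<Rightarrow> 'a \<Rightarrow> real) \<Rightarrow> bool" where
  "pfsa delta pit \<longleftrightarrow>
     (\<forall>q \<sigma>. 0 \<le> pit q \<sigma>) \<and>
     (\<forall>q. (\<Sum>\<sigma>\<in>UNIV. pit q \<sigma>) = 1) \<and>
     (\<forall>q q'. (q, q') \<in> {(p, delta p \<sigma>) | p \<sigma>. 0 < pit p \<sigma>}\<^sup>*)"

definition Gamma :: "('q::finite \<Rightarrow> 'a \<Rightarrow> 'q) \<Rightarrow> ('q \<Rightarrow> 'a \<Rightarrow> real) \<Rightarrow> 'a \<Rightarrow> 'q \<Rightarrow> 'q \<Rightarrow> real" where
  "Gamma delta pit \<sigma> = (\<lambda>i j. if delta i \<sigma> = j then pit i \<sigma> else 0)"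

definition trans_mat :: "('q::finite \<Rightarrow> 'a::finite \<Rightarrow> 'q) \<Rightarrow> ('q \<Rightarrow> 'a \<Rightarrow> real) \<Rightarrow> 'q \<Rightarrow> 'q \<Rightarrow> real" where
  "trans_mat delta pit = (\<lambda>i j. \<Sum>\<sigma>\<in>{\<sigma>. delta i \<sigma> = j}. pit i \<sigma>)"

definition vecmat :: "('q::finite \<Rightarrow> real) \<Rightarrow> ('q \<Rightarrow> 'q \<Rightarrow> real) \<Rightarrow> 'q \<Rightarrow> real" where
  "vecmat p A = (\<lambda>j. \<Sum>i\<in>UNIV. p i * A i j)"

text \<open>Stationary distribution wp_lambda (unique for a strongly connected PFSA).\<close>
definition stat_dist :: "('q::finite \<Rightarrow> 'a::finite \<Rightarrow> 'q) \<Rightarrow> ('q \<Rightarrow> 'a \<Rightarrow> real) \<Rightarrow> 'q \<Rightarrow> real" where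
  "stat_dist delta pit = (THE p. (\<forall>q. 0 \<le> p q) \<and> (\<Sum>q\<in>UNIV. p q) = 1
                                   \<and> vecmat p (trans_mat delta pit) = p)"

definition wp_unnorm :: "('q::finite \<Rightarrow> 'a::finite \<Rightarrow> 'q) \<Rightarrow> ('q \<Rightarrow> 'a \<Rightarrow> real) \<Rightarrow> 'a list \<Rightarrow> 'q \<Rightarrow> real" where
  "wp_unnorm delta pit x = foldl (\<lambda>p \<sigma>. vecmat p (Gamma delta pit \<sigma>)) (stat_dist delta pit) x"

definition norm1 :: "('i::finite \<Rightarrow> real) \<Rightarrow> real" where
  "norm1 v = (\<Sum>i\<in>UNIV. \<bar>v i\<bar>)"

definition norm_inf :: "('i::finite \<Rightarrow> real) \<Rightarrow> real" where
  "norm_inf v = Max (range (\<lambda>i. \<bar>v i\<bar>))"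

definition wp :: "('q::finite \<Rightarrow> 'a::finite \<Rightarrow> 'q) \<Rightarrow> ('q \<Rightarrow> 'a \<Rightarrow> real) \<Rightarrow> 'a list \<Rightarrow> 'q \<Rightarrow> real" where
  "wp delta pit x = (\<lambda>q. wp_unnorm delta pit x q / norm1 (wp_unnorm delta pit x))"

definition basis_vec :: "'q \<Rightarrow> 'q \<Rightarrow> real" where
  "basis_vec q = (\<lambda>q'. if q' = q then 1 else 0)"

definition eps_synchronizing :: "('q::finite \<Rightarrow> 'a::finite \<Rightarrow> 'q) \<Rightarrow> ('q \<Rightarrow> 'a \<Rightarrow> real) \<Rightarrow> real \<Rightarrow> 'a list \<Rightarrow> bool" where
  "eps_synchronizing delta pit \<epsilon> x \<longleftrightarrow> (\<exists>q. norm_inf (\<lambda>i. wp delta pit x i - basis_vec q i) \<le> \<epsilon>)"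

definition occ_count :: "'a list \<Rightarrow> 'a list \<Rightarrow> nat" where
  "occ_count s y = card {i. i + length y \<le> length s \<and> take (length y) (drop i s) = y}"

definition symb_deriv :: "'a::finite list \<Rightarrow> 'a list \<Rightarrow> 'a \<Rightarrow> real" where
  "symb_deriv s x = (\<lambda>\<sigma>. real (occ_count s (x @ [\<sigma>])) / (\<Sum>\<sigma>'\<in>UNIV. real (occ_count s (x @ [\<sigma>']))))"

text \<open>M is the law of a realization (infinite symbol sequence) generated by the PFSA
  started in its stationary distribution: a probability measure on symbol streams
  whose cylinder probabilities are Pr(s starts with w) = || wp_lambda Gamma_w ||_1.
  (These finite-dimensional distributions determine the measure uniquely.)\<close>
definition realization_measure :: "('q::finite \<Rightarrow> 'a::finite \<Rightarrow> 'q) \<Rightarrow> ('q \<Rightarrow> 'a \<Rightarrow> real) \<Rightarrow> 'a stream measure \<Rightarrow> bool" where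
  "realization_measure delta pit M \<longleftrightarrow>
     prob_space M \<and> sets M = sets (stream_space (count_space UNIV)) \<and>
     (\<forall>w. measure M {\<omega> \<in> space M. stake (length w) \<omega> = w} = norm1 (wp_unnorm delta pit w))"

end

theory Submission
  imports Defs "HOL-Library.Discrete_Functions"
begin

(* Let mu(y) = |wp_lambda Gamma_y|_1 be the stationary probability of a word y. Then
   mu(x sigma) / mu(x) = sum_i wp_x(i) pi(i, sigma) is a mixture of the rows of pi with weight
   wp_x(q) >= 1 - eps on row q, hence eps-close to pi(q, .) in the sup norm, and it remains to
   show #^s(y) / |s| --> mu(y) almost surely for every nonempty word y.
   The occurrence indicators of y have mean mu(y), and the covariance of the occurrences at
   positions i and i + |y| + k is |wp_lambda Gamma_y T^k Gamma_y|_1 - mu(y)^2, T the transition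
   matrix. As wp_lambda Gamma_y - mu(y) wp_lambda has mass zero, irreducibility gives g with
   g - g T equal to it (Poisson equation), so the covariances telescope and have bounded
   partial sums. Hence
   the number of occurrences in a prefix of length N has variance O(N), and Chebyshev's
   inequality along the squares N = n^2, Borel-Cantelli and monotonicity give the strong law. *)

lemma abs_le_norm_inf: "\<bar>f i\<bar> \<le> norm_inf (f :: 'i::finite \<Rightarrow> real)"
  unfolding norm_inf_def by (rule Max_ge) auto

lemma norm_inf_le: "(\<And>i. \<bar>f i\<bar> \<le> B) \<Longrightarrow> norm_inf (f :: 'i::finite \<Rightarrow> real) \<le> B"
  unfolding norm_inf_def by (subst Max_le_iff) auto

lemma norm_inf_le_add_dist:
  "norm_inf (f :: 'i::finite \<Rightarrow> real) \<le> norm_inf g + (\<Sum>i\<in>UNIV. \<bar>f i - g i\<bar>)"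
proof (rule norm_inf_le)
  fix i
  have "\<bar>f i - g i\<bar> \<le> (\<Sum>i\<in>UNIV. \<bar>f i - g i\<bar>)" by (rule member_le_sum) auto
  then show "\<bar>f i\<bar> \<le> norm_inf g + (\<Sum>i\<in>UNIV. \<bar>f i - g i\<bar>)"
    using abs_le_norm_inf[of g i] by linarith
qed

lemma tendsto_norm_inf:
  fixes F :: "nat \<Rightarrow> 'i::finite \<Rightarrow> real"
  assumes "\<And>i. (\<lambda>n. F n i) \<longlonglongrightarrow> L i"
  shows "(\<lambda>n. norm_inf (F n)) \<longlonglongrightarrow> norm_inf L"
proof -
  define D where "D n = (\<Sum>i\<in>UNIV. \<bar>F n i - L i\<bar>)" for n
  have "(\<lambda>n. \<bar>F n i - L i\<bar>) \<longlonglongrightarrow> \<bar>L i - L i\<bar>" for i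
    by (intro tendsto_intros assms)
  then have "D \<longlonglongrightarrow> (\<Sum>i\<in>UNIV. \<bar>L i - L i\<bar>)"
    unfolding D_def by (intro tendsto_sum) auto
  then have D0: "D \<longlonglongrightarrow> 0" by simp
  have lower: "(\<lambda>n. norm_inf L - D n) \<longlonglongrightarrow> norm_inf L - 0"
    and upper: "(\<lambda>n. norm_inf L + D n) \<longlonglongrightarrow> norm_inf L + 0"
    by (intro tendsto_intros D0)+
  have below: "norm_inf L - D n \<le> norm_inf (F n)" for n
  proof -
    have "norm_inf L \<le> norm_inf (F n) + (\<Sum>i\<in>UNIV. \<bar>L i - F n i\<bar>)"
      by (rule norm_inf_le_add_dist)
    moreover have "(\<Sum>i\<in>UNIV. \<bar>L i - F n i\<bar>) = D n"
      unfolding D_def by (simp add: abs_minus_commute)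
    ultimately show ?thesis by linarith
  qed
  have above: "norm_inf (F n) \<le> norm_inf L + D n" for n
    unfolding D_def by (rule norm_inf_le_add_dist)
  show ?thesis
    by (rule tendsto_sandwich[OF _ _ lower[simplified] upper[simplified]]) (simp_all add: below above)
qed


section \<open>A strong law for processes with linearly growing variance\<close>

lemma LIMSEQ_div_of_mono_squares:
  fixes s :: "nat \<Rightarrow> real"
  assumes mono: "mono s" and nonneg: "\<And>n. 0 \<le> s n"
    and squares: "(\<lambda>k. s (k^2) / real (k^2)) \<longlonglongrightarrow> m"
  shows "(\<lambda>n. s n / real n) \<longlonglongrightarrow> m"
proof -
  \<comment> \<open>for k = floor_sqrt n, monotonicity puts s n / n between a k and b k\<close>
  define a where "a k = s (k^2) / real (k^2) * (real k / real (Suc k))^2" for k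
  define b where "b k = s ((Suc k)^2) / real ((Suc k)^2) * (real (Suc k) / real k)^2" for k
  have a: "a \<longlonglongrightarrow> m * 1^2"
    unfolding a_def by (intro tendsto_intros squares LIMSEQ_n_over_Suc_n)
  have b: "b \<longlonglongrightarrow> m * 1^2"
    unfolding b_def by (intro tendsto_intros LIMSEQ_Suc[OF squares] LIMSEQ_Suc_n_over_n)
  have sqrt_top: "filterlim floor_sqrt at_top at_top"
    unfolding filterlim_at_top
  proof
    fix Z :: nat
    show "eventually (\<lambda>n. Z \<le> floor_sqrt n) at_top"
      unfolding eventually_at_top_linorder by (intro exI[of _ "Z^2"]) (auto intro: le_floor_sqrtI)
  qed
  have a_lim: "(\<lambda>n. a (floor_sqrt n)) \<longlonglongrightarrow> m"
    using filterlim_compose[OF a sqrt_top] by simp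
  have b_lim: "(\<lambda>n. b (floor_sqrt n)) \<longlonglongrightarrow> m"
    using filterlim_compose[OF b sqrt_top] by simp
  have bounds: "a (floor_sqrt n) \<le> s n / real n \<and> s n / real n \<le> b (floor_sqrt n)"
    if "1 \<le> n" for n
  proof -
    define k where "k = floor_sqrt n"
    have "k^2 \<le> n" "n < (Suc k)^2"
      unfolding k_def by (simp, rule Suc_floor_sqrt_power2_gt)
    have k_sq: "(real k)^2 \<le> real n"
    proof -
      have "real (k^2) \<le> real n" using \<open>k^2 \<le> n\<close> by (simp only: of_nat_le_iff)
      then show ?thesis by simp
    qed
    have Suc_k_sq: "real n \<le> (1 + real k)^2"
    proof -
      have "real n \<le> real ((Suc k)^2)" using \<open>n < (Suc k)^2\<close> by (simp only: of_nat_le_iff)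
      then show ?thesis by simp
    qed
    have k_pos: "0 < k" unfolding k_def using that by simp
    have n_pos: "0 < real n" using that by simp
    have "s (k^2) \<le> s n" "s n \<le> s ((Suc k)^2)"
      using mono \<open>k^2 \<le> n\<close> \<open>n < (Suc k)^2\<close> by (simp_all add: monoD)
    have "a k = s (k^2) / real ((Suc k)^2)"
      unfolding a_def using k_pos by (simp add: power_divide field_simps)
    also have "\<dots> \<le> s (k^2) / real n"
      using Suc_k_sq n_pos nonneg[of "k^2"] by (intro divide_left_mono) auto
    also have "\<dots> \<le> s n / real n"
      using \<open>s (k^2) \<le> s n\<close> n_pos by (simp add: divide_right_mono)
    finally have lower: "a k \<le> s n / real n" .
    have "s n / real n \<le> s ((Suc k)^2) / real n"
      using \<open>s n \<le> s ((Suc k)^2)\<close> n_pos by (simp add: divide_right_mono)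
    also have "\<dots> \<le> s ((Suc k)^2) / real (k^2)"
      using k_sq k_pos n_pos nonneg[of "(Suc k)^2"] by (intro divide_left_mono) auto
    also have "\<dots> = b k"
      unfolding b_def using k_pos by (simp add: power_divide field_simps)
    finally show ?thesis using lower unfolding k_def by simp
  qed
  show ?thesis
  proof (rule tendsto_sandwich[OF _ _ a_lim b_lim])
    show "\<forall>\<^sub>F n in sequentially. a (floor_sqrt n) \<le> s n / real n"
      unfolding eventually_at_top_linorder using bounds by blast
    show "\<forall>\<^sub>F n in sequentially. s n / real n \<le> b (floor_sqrt n)"
      unfolding eventually_at_top_linorder using bounds by blast
  qed
qed

lemma (in prob_space) AE_LIMSEQ_div_of_linear_variance:
  fixes S :: "nat \<Rightarrow> 'a \<Rightarrow> real"
  assumes meas[measurable]: "\<And>N. S N \<in> borel_measurable M"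
    and mono: "\<And>\<omega>. mono (\<lambda>N. S N \<omega>)" and nonneg: "\<And>N \<omega>. 0 \<le> S N \<omega>"
    and square_int: "\<And>N. integrable M (\<lambda>\<omega>. (S N \<omega>)^2)"
    and mean: "\<And>N. expectation (S N) = real N * m"
    and var: "\<And>N. variance (S N) \<le> real N * C"
  shows "AE \<omega> in M. (\<lambda>N. S N \<omega> / real N) \<longlonglongrightarrow> m"
proof -
  define A where "A \<delta> n = {\<omega> \<in> space M. \<delta> * real (n^2) \<le> \<bar>S (n^2) \<omega> - real (n^2) * m\<bar>}"
    for \<delta> n
  have Chebyshev: "prob (A \<delta> n) \<le> C / \<delta>^2 * inverse (real n ^ 2)" if "0 < \<delta>" "1 \<le> n" for \<delta> n
  proof -
    have n_pos: "0 < real (n^2)" using that by simp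
    have "prob (A \<delta> n) \<le> variance (S (n^2)) / (\<delta> * real (n^2))^2"
      using Chebyshev_inequality[OF meas[of "n^2"] square_int[of "n^2"] mult_pos_pos[OF that(1) n_pos]]
      unfolding A_def by (simp add: mean)
    also have "\<dots> \<le> real (n^2) * C / (\<delta> * real (n^2))^2"
      by (intro divide_right_mono var) simp
    also have "\<dots> = C / \<delta>^2 * inverse (real n ^ 2)"
      using n_pos that by (simp add: field_simps power2_eq_square)
    finally show ?thesis .
  qed
  have eventually_outside: "AE \<omega> in M. eventually (\<lambda>n. \<omega> \<in> space M - A \<delta> n) sequentially"
    if "0 < \<delta>" for \<delta>
  proof (rule borel_cantelli_AE1)
    show "A \<delta> n \<in> sets M" for n unfolding A_def by measurable
    show "emeasure M (A \<delta> n) < \<infinity>" for n by (simp add: less_top[symmetric])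
    have "summable (\<lambda>n. C / \<delta>^2 * inverse (real n ^ 2))"
      by (intro summable_mult inverse_power_summable) simp
    then show "summable (\<lambda>n. prob (A \<delta> n))"
    proof (rule summable_comparison_test')
      fix n :: nat assume "1 \<le> n"
      then show "norm (prob (A \<delta> n)) \<le> C / \<delta>^2 * inverse (real n ^ 2)"
        using Chebyshev[OF that] by simp
    qed
  qed
  have "AE \<omega> in M. \<forall>l. eventually (\<lambda>n. \<omega> \<in> space M - A (1 / real (Suc l)) n) sequentially"
    by (subst AE_all_countable) (intro allI eventually_outside, simp)
  then show ?thesis
  proof eventually_elim
    case (elim \<omega>)
    have "(\<lambda>k. S (k^2) \<omega> / real (k^2)) \<longlonglongrightarrow> m"
      unfolding LIMSEQ_iff
    proof (intro allI impI)
      fix r :: real assume "0 < r"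
      then obtain l where l: "inverse (real (Suc l)) < r" using reals_Archimedean by blast
      obtain n0 where n0: "\<And>n. n0 \<le> n \<Longrightarrow> \<omega> \<in> space M - A (1 / real (Suc l)) n"
        using elim[rule_format, of l] unfolding eventually_sequentially by blast
      show "\<exists>n0. \<forall>n\<ge>n0. norm (S (n^2) \<omega> / real (n^2) - m) < r"
      proof (intro exI[of _ "max n0 1"] allI impI)
        fix n assume "max n0 1 \<le> n"
        then have "n0 \<le> n" and n_pos: "0 < real (n^2)" by auto
        have "\<bar>S (n^2) \<omega> - real (n^2) * m\<bar> < 1 / real (Suc l) * real (n^2)"
          using n0[OF \<open>n0 \<le> n\<close>] unfolding A_def by auto
        then have "\<bar>S (n^2) \<omega> - real (n^2) * m\<bar> / real (n^2) < 1 / real (Suc l)"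
          using n_pos by (simp add: divide_less_eq)
        moreover have "\<bar>S (n^2) \<omega> - real (n^2) * m\<bar> / real (n^2) = \<bar>S (n^2) \<omega> / real (n^2) - m\<bar>"
          using n_pos by (simp add: field_simps abs_divide)
        ultimately show "norm (S (n^2) \<omega> / real (n^2) - m) < r"
          using l by (simp add: inverse_eq_divide)
      qed
    qed
    then show ?case by (rule LIMSEQ_div_of_mono_squares[OF mono nonneg])
  qed
qed

lemma abs_double_sum_le_of_gap_dependent:
  fixes c :: "nat \<Rightarrow> nat \<Rightarrow> real" and f :: "nat \<Rightarrow> real"
  assumes sym: "\<And>i j. c i j = c j i" and bounded: "\<And>i j. \<bar>c i j\<bar> \<le> 1"
    and gap: "\<And>i k. c i (i + L + k) = f k"
    and partial_sums: "\<And>K. \<bar>\<Sum>k<K. f k\<bar> \<le> B" and "1 \<le> L"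
  shows "\<bar>\<Sum>i<N. \<Sum>j<N. c i j\<bar> \<le> real N * (2 * real L + 2 * B)"
proof -
  have row: "\<bar>\<Sum>j<N. c i j\<bar> \<le> 2 * real L + 2 * B" if "i < N" for i
  proof -
    \<comment> \<open>split row i at the band i - L < j < i + L around the diagonal\<close>
    define a where "a = i + 1 - L"
    define b where "b = min N (i + L)"
    have "a \<le> b" "b \<le> N" unfolding a_def b_def using that \<open>1 \<le> L\<close> by auto
    then have split: "(\<Sum>j<N. c i j)
        = (\<Sum>j\<in>{0..<a}. c i j) + (\<Sum>j\<in>{a..<b}. c i j) + (\<Sum>j\<in>{b..<N}. c i j)"
      by (simp add: sum.atLeastLessThan_concat atLeast0LessThan[symmetric])
    have left: "(\<Sum>j\<in>{0..<a}. c i j) = (\<Sum>k<a. f k)"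
    proof -
      have "(\<Sum>j\<in>{0..<a}. c i j) = (\<Sum>j<a. f (a - Suc j))"
        unfolding atLeast0LessThan
      proof (rule sum.cong)
        fix j assume "j \<in> {..<a}"
        then have "i = j + L + (a - Suc j)" unfolding a_def by auto
        then have "c j i = f (a - Suc j)" using gap[of j "a - Suc j"] by simp
        then show "c i j = f (a - Suc j)" using sym by simp
      qed simp
      also have "\<dots> = (\<Sum>k<a. f k)" by (rule sum.nat_diff_reindex)
      finally show ?thesis .
    qed
    have right: "(\<Sum>j\<in>{b..<N}. c i j) = (\<Sum>k<N - (i + L). f k)"
    proof (cases "i + L \<le> N")
      case True
      then have "b = i + L" unfolding b_def by simp
      then have "(\<Sum>j\<in>{b..<N}. c i j) = (\<Sum>k\<in>{0..<N - (i + L)}. c i (k + (i + L)))"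
        using True sum.shift_bounds_nat_ivl[of "c i" 0 "i + L" "N - (i + L)"] by simp
      also have "\<dots> = (\<Sum>k<N - (i + L). f k)"
        unfolding atLeast0LessThan
      proof (rule sum.cong)
        show "c i (k + (i + L)) = f k" for k using gap[of i k] by (simp add: add.commute)
      qed simp
      finally show ?thesis .
    qed (simp add: b_def)
    have "\<bar>\<Sum>j\<in>{a..<b}. c i j\<bar> \<le> (\<Sum>j\<in>{a..<b}. 1)"
      by (rule order_trans[OF sum_abs]) (intro sum_mono bounded)
    also have "\<dots> = real (b - a)" by simp
    also have "\<dots> \<le> 2 * real L" unfolding a_def b_def by linarith
    finally show ?thesis
      using partial_sums[of a] partial_sums[of "N - (i + L)"] unfolding split left right
      by linarith
  qed
  have "\<bar>\<Sum>i<N. \<Sum>j<N. c i j\<bar> \<le> (\<Sum>i<N. \<bar>\<Sum>j<N. c i j\<bar>)" by (rule sum_abs)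
  also have "\<dots> \<le> (\<Sum>i<N. 2 * real L + 2 * B)" by (intro sum_mono row) simp
  finally show ?thesis by simp
qed


section \<open>Irreducible stochastic matrices\<close>

definition mass :: "('i::finite \<Rightarrow> real) \<Rightarrow> real" where
  "mass r = (\<Sum>i\<in>UNIV. r i)"

lemma vecmat_lincomb:
  "vecmat (\<lambda>i. a * r i + b * s i) A j = a * vecmat r A j + b * vecmat s A j"
  unfolding vecmat_def by (simp add: algebra_simps sum.distrib sum_distrib_left)

lemma vecmat_nonneg: "(\<And>i. 0 \<le> r i) \<Longrightarrow> (\<And>i j. 0 \<le> A i j) \<Longrightarrow> 0 \<le> vecmat r A j"
  unfolding vecmat_def by (simp add: sum_nonneg)

lemma sum_abs_vecmat_le:
  assumes "\<And>i j. 0 \<le> A i j" "\<And>i. (\<Sum>j\<in>UNIV. A i j) \<le> 1"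
  shows "(\<Sum>j\<in>UNIV. \<bar>vecmat r A j\<bar>) \<le> (\<Sum>i\<in>UNIV. \<bar>r i\<bar>)"
proof -
  have "(\<Sum>j\<in>UNIV. \<bar>vecmat r A j\<bar>) \<le> (\<Sum>j\<in>UNIV. \<Sum>i\<in>UNIV. \<bar>r i\<bar> * A i j)"
    unfolding vecmat_def
    by (intro sum_mono order_trans[OF sum_abs]) (simp add: abs_mult assms(1))
  also have "\<dots> = (\<Sum>i\<in>UNIV. \<bar>r i\<bar> * (\<Sum>j\<in>UNIV. A i j))"
    by (subst sum.swap) (simp add: sum_distrib_left)
  also have "\<dots> \<le> (\<Sum>i\<in>UNIV. \<bar>r i\<bar>)"
    by (intro sum_mono) (simp add: assms(2) mult_left_le)
  finally show ?thesis .
qed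

locale irreducible_stochastic_matrix =
  fixes P :: "'q::finite \<Rightarrow> 'q \<Rightarrow> real"
  assumes nonneg: "0 \<le> P i j"
    and row_sum: "(\<Sum>j\<in>UNIV. P i j) = 1"
    and irreducible: "(i, j) \<in> {(i, j). 0 < P i j}\<^sup>*"
begin

abbreviation evolve :: "nat \<Rightarrow> ('q \<Rightarrow> real) \<Rightarrow> 'q \<Rightarrow> real" where
  "evolve k \<equiv> (\<lambda>p. vecmat p P) ^^ k"

lemma mass_vecmat: "mass (vecmat g P) = mass g"
proof -
  have "mass (vecmat g P) = (\<Sum>i\<in>UNIV. g i * (\<Sum>j\<in>UNIV. P i j))"
    unfolding mass_def vecmat_def by (subst sum.swap) (simp add: sum_distrib_left)
  then show ?thesis by (simp add: row_sum mass_def)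
qed

lemma invariant_lincomb:
  "vecmat g P = g \<Longrightarrow> vecmat h P = h \<Longrightarrow> vecmat (\<lambda>i. a * g i + b * h i) P = (\<lambda>i. a * g i + b * h i)"
  by (simp add: vecmat_lincomb fun_eq_iff)

lemma invariant_abs:
  assumes "vecmat g P = g"
  shows "vecmat (\<lambda>i. \<bar>g i\<bar>) P = (\<lambda>i. \<bar>g i\<bar>)"
proof -
  have le: "\<bar>g j\<bar> \<le> vecmat (\<lambda>i. \<bar>g i\<bar>) P j" for j
  proof -
    have "\<bar>g j\<bar> = \<bar>\<Sum>i\<in>UNIV. g i * P i j\<bar>"
      using assms unfolding vecmat_def by (metis (no_types, lifting))
    also have "\<dots> \<le> (\<Sum>i\<in>UNIV. \<bar>g i * P i j\<bar>)" by (rule sum_abs)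
    also have "\<dots> = vecmat (\<lambda>i. \<bar>g i\<bar>) P j"
      unfolding vecmat_def by (simp add: abs_mult nonneg)
    finally show ?thesis .
  qed
  have "(\<Sum>j\<in>UNIV. vecmat (\<lambda>i. \<bar>g i\<bar>) P j - \<bar>g j\<bar>) = 0"
    using mass_vecmat[of "\<lambda>i. \<bar>g i\<bar>"] by (simp add: sum_subtractf mass_def)
  then have "\<forall>j\<in>UNIV. vecmat (\<lambda>i. \<bar>g i\<bar>) P j - \<bar>g j\<bar> = 0"
    by (subst sum_nonneg_eq_0_iff[symmetric]) (auto simp: le)
  then show ?thesis by auto
qed

text \<open>Invariance gives g i * P i k \<le> g k, so zeros propagate backwards along the
  positive entries of P, i.e. to every state.\<close>

lemma invariant_nonneg_eq_0:
  assumes "vecmat g P = g" "\<And>i. 0 \<le> g i" "g j = 0"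
  shows "g i = 0"
  using irreducible[of i j]
proof (induction rule: converse_rtrancl_induct)
  case (step i k)
  then have "0 < P i k" by simp
  have "g i * P i k \<le> (\<Sum>l\<in>UNIV. g l * P l k)"
    by (rule member_le_sum) (auto simp: assms(2) nonneg)
  also have "\<dots> = g k" using assms(1) unfolding vecmat_def by metis
  finally have "g i * P i k \<le> 0" using step by simp
  then show ?case using \<open>0 < P i k\<close> assms(2)[of i] by (simp add: mult_le_0_iff)
qed (use assms in simp)

lemma invariant_mass_0:
  assumes "vecmat g P = g" "mass g = 0"
  shows "g = (\<lambda>_. 0)"
proof -
  define h where "h i = (1/2) * \<bar>g i\<bar> + (1/2) * g i" for i
  have h_inv: "vecmat h P = h"
    unfolding h_def by (intro invariant_lincomb invariant_abs assms(1))
  have h_nonneg: "0 \<le> h i" for i unfolding h_def by (simp add: abs_if)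
  obtain j where "g j \<le> 0"
  proof (rule ccontr)
    assume "\<not> thesis"
    then have "\<forall>j. 0 < g j" using that by (meson not_le)
    then have "0 < mass g" unfolding mass_def by (intro sum_pos) auto
    then show False using assms(2) by simp
  qed
  then have "h j = 0" unfolding h_def by simp
  then have h0: "h i = 0" for i using invariant_nonneg_eq_0[OF h_inv h_nonneg] by blast
  have "g i \<le> 0" for i using h0[of i] unfolding h_def by (auto split: if_splits)
  then have "\<forall>i\<in>UNIV. - g i = 0"
    using assms(2) by (subst sum_nonneg_eq_0_iff[symmetric]) (auto simp: sum_negf mass_def)
  then show ?thesis by auto
qed

lemma ex_nonzero_invariant: "\<exists>g. vecmat g P = g \<and> g \<noteq> (\<lambda>_. 0)"
proof -
  define L :: "real^'q \<Rightarrow> real^'q" where "L v = (\<chi> j. v$j - (\<Sum>i\<in>UNIV. v$i * P i j))" for v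
  have lin: "linear L"
    by (rule linearI) (simp_all add: L_def vec_eq_iff ring_distribs sum.distrib
        sum_distrib_left sum_subtractf mult.assoc)
  have "\<not> surj L"
  proof
    fix j0 :: 'q
    assume "surj L"
    then obtain v where v: "L v = (\<chi> j. if j = j0 then 1 else 0)" unfolding surj_def by metis
    have "(\<Sum>j\<in>UNIV. L v $ j) = mass (\<lambda>i. v$i) - mass (vecmat (\<lambda>i. v$i) P)"
      by (simp add: L_def sum_subtractf mass_def vecmat_def)
    then show False using v by (simp add: mass_vecmat)
  qed
  then have "\<not> inj L" using linear_injective_imp_surjective[OF lin] by blast
  then have "\<exists>v. L v = 0 \<and> v \<noteq> 0" by (simp add: linear_injective_0[OF lin])
  then obtain v where v: "L v = 0" "v \<noteq> 0" by blast
  have "v$j - vecmat (\<lambda>i. v$i) P j = 0" for j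
    using arg_cong[OF v(1), of "\<lambda>w. w $ j"] by (simp add: L_def vecmat_def)
  then have "vecmat (\<lambda>i. v$i) P = (\<lambda>i. v$i)" by (intro ext) (metis right_minus_eq)
  moreover have "(\<lambda>i. v$i) \<noteq> (\<lambda>_. 0)" using v(2) by (metis vec_eq_iff zero_index)
  ultimately show ?thesis by blast
qed

lemma ex1_stationary: "\<exists>!p. (\<forall>q. 0 \<le> p q) \<and> (\<Sum>q\<in>UNIV. p q) = 1 \<and> vecmat p P = p"
proof (rule ex_ex1I)
  obtain g where g: "vecmat g P = g" "g \<noteq> (\<lambda>_. 0)" using ex_nonzero_invariant by blast
  define a where "a = mass (\<lambda>i. \<bar>g i\<bar>)"
  obtain i0 where "g i0 \<noteq> 0" using g(2) by auto
  then have "0 < \<bar>g i0\<bar>" by simp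
  also have "\<bar>g i0\<bar> \<le> a" unfolding a_def mass_def by (rule member_le_sum) auto
  finally have "0 < a" .
  \<comment> \<open>a linear combination of g and |g|, so that invariant_lincomb applies\<close>
  define p where "p i = (1/a) * \<bar>g i\<bar> + 0 * g i" for i
  have "vecmat p P = p" unfolding p_def by (intro invariant_lincomb invariant_abs g(1))
  moreover have "(\<Sum>q\<in>UNIV. p q) = 1" "\<forall>q. 0 \<le> p q"
    using \<open>0 < a\<close> unfolding p_def a_def mass_def by (simp_all add: sum_divide_distrib[symmetric])
  ultimately show "\<exists>p. (\<forall>q. 0 \<le> p q) \<and> (\<Sum>q\<in>UNIV. p q) = 1 \<and> vecmat p P = p" by blast
next
  fix p p'
  assume p: "(\<forall>q. 0 \<le> p q) \<and> (\<Sum>q\<in>UNIV. p q) = 1 \<and> vecmat p P = p"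
    and p': "(\<forall>q. 0 \<le> p' q) \<and> (\<Sum>q\<in>UNIV. p' q) = 1 \<and> vecmat p' P = p'"
  have "vecmat (\<lambda>i. 1 * p i + (-1) * p' i) P = (\<lambda>i. 1 * p i + (-1) * p' i)"
    using p p' by (intro invariant_lincomb) auto
  moreover have "mass (\<lambda>i. 1 * p i + (-1) * p' i) = 0"
    using p p' by (simp add: mass_def sum_subtractf)
  ultimately have "(\<lambda>i. 1 * p i + (-1) * p' i) = (\<lambda>_. 0)" by (rule invariant_mass_0)
  then show "p = p'" by (auto simp: fun_eq_iff)
qed

lemma poisson_equation:
  assumes "mass d = 0"
  obtains g where "\<And>j. g j - vecmat g P j = d j"
proof -
  obtain p where p: "\<forall>q. 0 \<le> p q" "(\<Sum>q\<in>UNIV. p q) = 1" "vecmat p P = p"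
    using ex1_stationary by blast
  \<comment> \<open>L agrees with I - P on vectors of mass zero, and it is injective, hence onto\<close>
  define L :: "real^'q \<Rightarrow> real^'q"
    where "L v = (\<chi> j. v$j - (\<Sum>i\<in>UNIV. v$i * P i j) + (\<Sum>i\<in>UNIV. v$i) * p j)" for v
  have lin: "linear L"
    by (rule linearI) (simp_all add: L_def vec_eq_iff ring_distribs sum.distrib
        sum_distrib_left mult.assoc sum_subtractf)
  have L_eq: "L v $ j = v$j - vecmat (\<lambda>i. v$i) P j + mass (\<lambda>i. v$i) * p j" for v j
    by (simp add: L_def vecmat_def mass_def)
  have mass_L: "mass (\<lambda>j. L v $ j) = mass (\<lambda>i. v$i)" for v
  proof -
    have "mass (\<lambda>j. L v $ j)
        = mass (\<lambda>i. v$i) - mass (vecmat (\<lambda>i. v$i) P) + mass (\<lambda>i. v$i) * (\<Sum>j\<in>UNIV. p j)"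
      unfolding L_eq mass_def by (simp add: sum.distrib sum_subtractf sum_distrib_left)
    then show ?thesis using p(2) by (simp add: mass_vecmat)
  qed
  have "inj L"
  proof (subst linear_injective_0[OF lin], intro allI impI)
    fix v assume "L v = 0"
    then have "mass (\<lambda>i. v$i) = 0" using mass_L[of v] by (simp add: mass_def)
    have "v$j - vecmat (\<lambda>i. v$i) P j = 0" for j
      using L_eq[of v j] \<open>L v = 0\<close> \<open>mass (\<lambda>i. v$i) = 0\<close> by simp
    then have "vecmat (\<lambda>i. v$i) P = (\<lambda>i. v$i)" by (intro ext) (metis right_minus_eq)
    then have "(\<lambda>i. v$i) = (\<lambda>_. 0)" using invariant_mass_0 \<open>mass (\<lambda>i. v$i) = 0\<close> by blast
    then show "v = 0" by (metis vec_eq_iff zero_index)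
  qed
  then have "surj L" by (rule linear_injective_imp_surjective[OF lin]) simp
  then obtain v where v: "L v = (\<chi> j. d j)" unfolding surj_def by metis
  then have "mass (\<lambda>i. v$i) = 0" using mass_L[of v] assms by (simp add: mass_def)
  with v have "v$j - vecmat (\<lambda>i. v$i) P j = d j" for j
    using L_eq[of v j] by simp
  then show ?thesis by (rule that)
qed

lemma evolve_lincomb:
  "evolve k (\<lambda>i. a * r i + b * s i) = (\<lambda>j. a * evolve k r j + b * evolve k s j)"
  by (induction k) (simp_all add: vecmat_lincomb)

lemma evolve_invariant: "vecmat p P = p \<Longrightarrow> evolve k p = p"
  by (induction k) simp_all

lemma sum_abs_evolve_le: "(\<Sum>j\<in>UNIV. \<bar>evolve k r j\<bar>) \<le> (\<Sum>i\<in>UNIV. \<bar>r i\<bar>)"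
proof (induction k)
  case (Suc k)
  have "(\<Sum>j\<in>UNIV. \<bar>evolve (Suc k) r j\<bar>) \<le> (\<Sum>j\<in>UNIV. \<bar>evolve k r j\<bar>)"
    by (simp, rule sum_abs_vecmat_le) (simp_all add: nonneg row_sum)
  then show ?case using Suc by linarith
qed simp

end


section \<open>Wildcard patterns\<close>

text \<open>A pattern is a word with wildcards; None matches every symbol.\<close>

definition allowed :: "'a option \<Rightarrow> 'a set" where
  "allowed oc = (case oc of None \<Rightarrow> UNIV | Some \<sigma> \<Rightarrow> {\<sigma>})"

definition matches :: "'a option list \<Rightarrow> 'a list \<Rightarrow> bool" where
  "matches c w \<longleftrightarrow> list_all2 (\<lambda>oc \<sigma>. \<sigma> \<in> allowed oc) c w"

lemma matches_length: "matches c w \<Longrightarrow> length w = length c"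
  unfolding matches_def by (simp add: list_all2_lengthD)

lemma finite_matches: "finite {w :: 'a::finite list. matches c w}"
proof (rule finite_subset)
  show "{w. matches c w} \<subseteq> {w. length w = length c}" using matches_length by auto
  show "finite {w :: 'a list. length w = length c}"
    using finite_lists_length_eq[of "UNIV::'a set" "length c"] by simp
qed

lemma matches_snoc: "{w. matches (c @ [oc]) w} = (\<lambda>(w, \<sigma>). w @ [\<sigma>]) ` ({w. matches c w} \<times> allowed oc)"
proof (intro set_eqI iffI)
  fix w assume "w \<in> {w. matches (c @ [oc]) w}"
  then obtain u \<sigma> where "w = u @ [\<sigma>]" "list_all2 (\<lambda>oc \<sigma>. \<sigma> \<in> allowed oc) c u" "\<sigma> \<in> allowed oc"
    by (auto simp: matches_def list_all2_append1 list_all2_Cons1)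
  then show "w \<in> (\<lambda>(w, \<sigma>). w @ [\<sigma>]) ` ({w. matches c w} \<times> allowed oc)"
    unfolding matches_def by auto
qed (auto simp: matches_def list_all2_appendI)

lemma matches_append: "matches (c @ d) w \<longleftrightarrow>
    length w = length c + length d \<and> matches c (take (length c) w) \<and> matches d (drop (length c) w)"
proof
  assume "matches (c @ d) w"
  then obtain u v where "w = u @ v" "length u = length c" "length v = length d"
     "list_all2 (\<lambda>oc \<sigma>. \<sigma> \<in> allowed oc) c u" "list_all2 (\<lambda>oc \<sigma>. \<sigma> \<in> allowed oc) d v"
    unfolding matches_def by (auto simp: list_all2_append1 dest: list_all2_lengthD)
  then show "length w = length c + length d \<and> matches c (take (length c) w) \<and> matches d (drop (length c) w)"
    unfolding matches_def by simp
next
  assume split: "length w = length c + length d \<and> matches c (take (length c) w) \<and> matches d (drop (length c) w)"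
  have "w = take (length c) w @ drop (length c) w" by simp
  then show "matches (c @ d) w"
    using split unfolding matches_def by (metis list_all2_appendI)
qed

lemma matches_replicate_None: "matches (replicate i None) w \<longleftrightarrow> length w = i"
  by (auto simp: matches_def list_all2_conv_all_nth allowed_def)

lemma matches_map_Some: "matches (map Some y) w \<longleftrightarrow> w = y"
  unfolding matches_def by (induction y arbitrary: w) (auto simp: list_all2_Cons1 allowed_def)

locale pfsa_chain =
  fixes delta :: "'q::finite \<Rightarrow> 'a::finite \<Rightarrow> 'q" and pit :: "'q \<Rightarrow> 'a \<Rightarrow> real"
  assumes pfsa: "pfsa delta pit"
begin

lemma pit_nonneg: "0 \<le> pit i \<sigma>" and pit_sum: "(\<Sum>\<sigma>\<in>UNIV. pit i \<sigma>) = 1"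
  using pfsa unfolding pfsa_def by auto

lemma pit_le_1: "pit i \<sigma> \<le> 1"
  using member_le_sum[of \<sigma> UNIV "pit i"] by (simp add: pit_nonneg pit_sum)

abbreviation "G \<equiv> Gamma delta pit"
abbreviation "TM \<equiv> trans_mat delta pit"

lemma G_nonneg: "0 \<le> G \<sigma> i j"
  unfolding Gamma_def by (simp add: pit_nonneg)

lemma G_row_sum: "(\<Sum>j\<in>UNIV. G \<sigma> i j) = pit i \<sigma>"
  unfolding Gamma_def by simp

lemma trans_mat_eq_sum_Gamma: "TM i j = (\<Sum>\<sigma>\<in>UNIV. G \<sigma> i j)"
  unfolding trans_mat_def Gamma_def by (simp add: sum.If_cases)

sublocale irreducible_stochastic_matrix TM
proof
  show "0 \<le> TM i j" for i j
    unfolding trans_mat_def by (simp add: sum_nonneg pit_nonneg)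
  show "(\<Sum>j\<in>UNIV. TM i j) = 1" for i
    unfolding trans_mat_eq_sum_Gamma by (subst sum.swap) (simp add: G_row_sum pit_sum)
  have edges: "{(p, delta p \<sigma>) | p \<sigma>. 0 < pit p \<sigma>} \<subseteq> {(i, j). 0 < TM i j}"
  proof clarify
    fix p \<sigma> assume "0 < pit p \<sigma>"
    moreover have "pit p \<sigma> \<le> TM p (delta p \<sigma>)"
      unfolding trans_mat_def by (rule member_le_sum) (auto simp: pit_nonneg)
    ultimately show "0 < TM p (delta p \<sigma>)" by simp
  qed
  show "(i, j) \<in> {(i, j). 0 < TM i j}\<^sup>*" for i j
  proof -
    have "(i, j) \<in> {(p, delta p \<sigma>) | p \<sigma>. 0 < pit p \<sigma>}\<^sup>*"
      using pfsa unfolding pfsa_def by simp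
    then show ?thesis using rtrancl_mono[OF edges] by (rule subsetD[rotated])
  qed
qed

abbreviation "p0 \<equiv> stat_dist delta pit"

lemma stat_dist_nonneg: "0 \<le> p0 q" and mass_stat_dist: "mass p0 = 1"
  and stat_dist_invariant: "vecmat p0 TM = p0"
  using theI'[OF ex1_stationary, folded stat_dist_def] unfolding mass_def by auto

definition vec_word :: "('q \<Rightarrow> real) \<Rightarrow> 'a list \<Rightarrow> 'q \<Rightarrow> real" where
  "vec_word r w = foldl (\<lambda>p \<sigma>. vecmat p (G \<sigma>)) r w"

lemma vec_word_snoc: "vec_word r (w @ [\<sigma>]) = vecmat (vec_word r w) (G \<sigma>)"
  unfolding vec_word_def by simp

lemma vec_word_nonneg: "(\<And>i. 0 \<le> r i) \<Longrightarrow> 0 \<le> vec_word r w j"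
  by (induction w arbitrary: j rule: rev_induct) (simp_all add: vec_word_def vecmat_nonneg G_nonneg)

lemma vec_word_lincomb:
  "vec_word (\<lambda>i. a * r i + b * s i) w = (\<lambda>j. a * vec_word r w j + b * vec_word s w j)"
  by (induction w rule: rev_induct) (simp_all add: vec_word_def vecmat_lincomb)

lemma sum_abs_vec_word_le: "(\<Sum>j\<in>UNIV. \<bar>vec_word r w j\<bar>) \<le> (\<Sum>i\<in>UNIV. \<bar>r i\<bar>)"
proof (induction w rule: rev_induct)
  case (snoc \<sigma> w)
  have "(\<Sum>j\<in>UNIV. \<bar>vec_word r (w @ [\<sigma>]) j\<bar>) \<le> (\<Sum>j\<in>UNIV. \<bar>vec_word r w j\<bar>)"
    unfolding vec_word_snoc by (rule sum_abs_vecmat_le) (simp_all add: G_nonneg G_row_sum pit_le_1)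
  then show ?case using snoc by linarith
qed (simp add: vec_word_def)

lemma abs_mass_vec_word_le: "\<bar>mass (vec_word r w)\<bar> \<le> (\<Sum>i\<in>UNIV. \<bar>r i\<bar>)"
  using sum_abs[of "vec_word r w" UNIV] sum_abs_vec_word_le[of r w] unfolding mass_def by linarith

definition word_prob :: "'a list \<Rightarrow> real" where
  "word_prob y = mass (vec_word p0 y)"

lemma word_prob_nonneg: "0 \<le> word_prob y"
  unfolding word_prob_def mass_def by (intro sum_nonneg vec_word_nonneg stat_dist_nonneg)

lemma wp_unnorm_eq: "wp_unnorm delta pit w = vec_word p0 w"
  unfolding wp_unnorm_def vec_word_def ..

lemma norm1_wp_unnorm: "norm1 (wp_unnorm delta pit w) = word_prob w"
  unfolding norm1_def word_prob_def mass_def wp_unnorm_eq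
  using vec_word_nonneg[of p0] stat_dist_nonneg by simp

definition pattern_step :: "'a option \<Rightarrow> ('q \<Rightarrow> real) \<Rightarrow> 'q \<Rightarrow> real" where
  "pattern_step oc r = (case oc of None \<Rightarrow> vecmat r TM | Some \<sigma> \<Rightarrow> vecmat r (G \<sigma>))"

definition vec_pattern :: "('q \<Rightarrow> real) \<Rightarrow> 'a option list \<Rightarrow> 'q \<Rightarrow> real" where
  "vec_pattern r c = foldl (\<lambda>p oc. pattern_step oc p) r c"

lemma vec_pattern_append: "vec_pattern r (c @ d) = vec_pattern (vec_pattern r c) d"
  unfolding vec_pattern_def by simp

lemma vec_pattern_Some: "vec_pattern r (map Some w) = vec_word r w"
  unfolding vec_pattern_def vec_word_def
  by (induction w arbitrary: r) (auto simp: pattern_step_def)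

lemma vec_pattern_None: "vec_pattern r (replicate k None) = evolve k r"
proof (induction k)
  case (Suc k)
  have "vec_pattern r (replicate (Suc k) None) = vec_pattern r (replicate k None @ [None])"
    by (simp add: replicate_append_same)
  also have "\<dots> = vecmat (vec_pattern r (replicate k None)) TM"
    by (simp add: vec_pattern_def pattern_step_def)
  finally show ?case using Suc by simp
qed (simp add: vec_pattern_def)

lemma sum_pattern_step: "(\<Sum>\<sigma>\<in>allowed oc. vecmat r (G \<sigma>) j) = pattern_step oc r j"
proof (cases oc)
  case None
  have "(\<Sum>\<sigma>\<in>UNIV. vecmat r (G \<sigma>) j) = vecmat r TM j"
    unfolding vecmat_def trans_mat_eq_sum_Gamma by (simp add: sum_distrib_left) (rule sum.swap)
  then show ?thesis using None by (simp add: allowed_def pattern_step_def)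
qed (simp add: allowed_def pattern_step_def)

lemma sum_vec_word_matches: "(\<Sum>w\<in>{w. matches c w}. vec_word r w j) = vec_pattern r c j"
proof (induction c arbitrary: j rule: rev_induct)
  case Nil
  have "{w :: 'a list. matches [] w} = {[]}" unfolding matches_def by auto
  then show ?case by (simp add: vec_word_def vec_pattern_def)
next
  case (snoc oc c)
  have inj: "inj_on (\<lambda>(w, \<sigma>). w @ [\<sigma>]) ({w. matches c w} \<times> allowed oc)"
    by (auto simp: inj_on_def)
  have "(\<Sum>w\<in>{w. matches (c @ [oc]) w}. vec_word r w j)
      = (\<Sum>(w, \<sigma>)\<in>{w. matches c w} \<times> allowed oc. vec_word r (w @ [\<sigma>]) j)"
    unfolding matches_snoc by (subst sum.reindex[OF inj]) (simp add: case_prod_unfold)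
  also have "\<dots> = (\<Sum>\<sigma>\<in>allowed oc. \<Sum>w\<in>{w. matches c w}. vecmat (vec_word r w) (G \<sigma>) j)"
    by (subst sum.cartesian_product[symmetric]) (simp add: vec_word_snoc sum.swap[of _ "allowed oc"])
  also have "\<dots> = (\<Sum>\<sigma>\<in>allowed oc. vecmat (\<lambda>i. \<Sum>w\<in>{w. matches c w}. vec_word r w i) (G \<sigma>) j)"
    unfolding vecmat_def by (simp add: sum_distrib_right sum.swap[of _ "{w. matches c w}"])
  also have "\<dots> = vec_pattern r (c @ [oc]) j"
    using snoc.IH by (simp add: sum_pattern_step vec_pattern_def)
  finally show ?case .
qed

text \<open>By the Poisson equation, p0 \<Gamma>_y - word_prob y \<cdot> p0 = g - g TM for some g,
  so the summands telescope.\<close>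

lemma bounded_correlation_sums:
  obtains B where "\<And>K. \<bar>\<Sum>k<K. mass (vec_word (evolve k (vec_word p0 y)) y) - (word_prob y)^2\<bar> \<le> B"
proof -
  define a where "a = vec_word p0 y"
  define m where "m = word_prob y"
  define T where "T r = mass (vec_word r y)" for r
  have T_lincomb: "T (\<lambda>i. \<alpha> * r i + \<beta> * s i) = \<alpha> * T r + \<beta> * T s" for \<alpha> \<beta> r s
    unfolding T_def mass_def vec_word_lincomb by (simp add: sum.distrib sum_distrib_left)
  have T_p0: "T p0 = m" unfolding T_def m_def word_prob_def ..
  define d where "d i = 1 * a i + (- m) * p0 i" for i
  have "mass a = m" unfolding a_def m_def word_prob_def ..
  then have "mass d = 0"
    using mass_stat_dist unfolding d_def mass_def
    by (simp add: sum_subtractf sum_distrib_left[symmetric])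
  then obtain g where g: "\<And>j. g j - vecmat g TM j = d j" using poisson_equation by blast
  have d_eq: "d = (\<lambda>i. 1 * g i + (-1) * vecmat g TM i)" using g by (auto simp: fun_eq_iff)
  have telescope: "T (evolve k a) - m^2 = T (evolve k g) - T (evolve (Suc k) g)" for k
  proof -
    have "T (evolve k a) - m^2 = T (evolve k a) - m * T (evolve k p0)"
      by (simp add: evolve_invariant[OF stat_dist_invariant] T_p0 power2_eq_square)
    also have "\<dots> = T (\<lambda>j. 1 * evolve k a j + (- m) * evolve k p0 j)" by (simp only: T_lincomb)
    also have "(\<lambda>j. 1 * evolve k a j + (- m) * evolve k p0 j) = evolve k d"
      unfolding d_def by (simp only: evolve_lincomb)
    also have "evolve k d = (\<lambda>j. 1 * evolve k g j + (-1) * evolve k (vecmat g TM) j)"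
      unfolding d_eq by (rule evolve_lincomb)
    also have "evolve k (vecmat g TM) = evolve (Suc k) g" by (simp only: funpow_Suc_right o_def)
    finally show ?thesis by (simp only: T_lincomb)
  qed
  have bound: "\<bar>T (evolve k g)\<bar> \<le> (\<Sum>i\<in>UNIV. \<bar>g i\<bar>)" for k
    using abs_mass_vec_word_le[of "evolve k g" y] sum_abs_evolve_le[of k g] unfolding T_def
    by linarith
  have telescope_sum: "(\<Sum>k<K. T (evolve k a) - m^2) = T (evolve 0 g) - T (evolve K g)" for K
    unfolding telescope by (rule sum_lessThan_telescope')
  have "\<bar>\<Sum>k<K. T (evolve k a) - m^2\<bar> \<le> 2 * (\<Sum>i\<in>UNIV. \<bar>g i\<bar>)" for K
    using telescope_sum[of K] bound[of 0] bound[of K] by linarith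
  then show ?thesis unfolding T_def a_def m_def by (rule that)
qed

end


section \<open>Occurrences of a word in a realization\<close>

lemma indicator_centered_product:
  "(indicator A \<omega> - c) * (indicator B \<omega> - c)
    = indicator (A \<inter> B) \<omega> - c * indicator A \<omega> - c * indicator B \<omega> + (c::real)^2"
  by (auto simp: indicator_def power2_eq_square algebra_simps)

locale pfsa_realization = pfsa_chain delta pit
  for delta :: "'q::finite \<Rightarrow> 'a::finite \<Rightarrow> 'q" and pit +
  fixes M :: "'a stream measure"
  assumes realization: "realization_measure delta pit M"
begin

sublocale prob_space M
  using realization unfolding realization_measure_def by simp

lemma sets_M: "sets M = sets (stream_space (count_space UNIV))"
  using realization unfolding realization_measure_def by simp

lemma space_M: "space M = UNIV"
  using sets_eq_imp_space_eq[OF sets_M] by (simp add: space_stream_space)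

lemma measurable_stake_M[measurable]: "stake n \<in> M \<rightarrow>\<^sub>M count_space UNIV"
  using measurable_stake measurable_cong_sets[OF sets_M refl] by blast

lemma stake_eq_sets: "{\<omega> \<in> space M. stake n \<omega> = w} \<in> sets M"
  by measurable

lemma prob_stake_eq: "prob {\<omega> \<in> space M. stake (length w) \<omega> = w} = word_prob w"
  using realization unfolding realization_measure_def norm1_wp_unnorm by simp

lemma prob_stake_matches:
  "prob {\<omega> \<in> space M. matches c (stake (length c) \<omega>)} = mass (vec_pattern p0 c)"
proof -
  define W where "W = {w. matches c w}"
  have "prob {\<omega> \<in> space M. matches c (stake (length c) \<omega>)}
      = prob (\<Union>w\<in>W. {\<omega> \<in> space M. stake (length c) \<omega> = w})"
    unfolding W_def by (rule arg_cong[where f = prob]) auto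
  also have "\<dots> = (\<Sum>w\<in>W. prob {\<omega> \<in> space M. stake (length c) \<omega> = w})"
    unfolding W_def using finite_matches
    by (intro finite_measure_finite_Union) (auto simp: disjoint_family_on_def stake_eq_sets)
  also have "\<dots> = (\<Sum>w\<in>W. word_prob w)"
  proof (rule sum.cong)
    fix w assume "w \<in> W"
    then have "length w = length c" unfolding W_def by (simp add: matches_length)
    then show "prob {\<omega> \<in> space M. stake (length c) \<omega> = w} = word_prob w"
      using prob_stake_eq[of w] by simp
  qed simp
  also have "\<dots> = mass (vec_pattern p0 c)"
    unfolding word_prob_def mass_def W_def sum_vec_word_matches[symmetric] by (rule sum.swap)
  finally show ?thesis .
qed

definition occurs_at :: "'a list \<Rightarrow> nat \<Rightarrow> 'a stream set" where
  "occurs_at y i = {\<omega> \<in> space M. drop i (stake (i + length y) \<omega>) = y}"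

lemma occurs_at_sets[measurable]: "occurs_at y i \<in> sets M"
  unfolding occurs_at_def by measurable

lemma occurs_at_eq: "occurs_at y i = {\<omega> \<in> space M. matches (replicate i None @ map Some y)
    (stake (length (replicate i None @ map Some y)) \<omega>)}"
  unfolding occurs_at_def by (simp only: matches_append) (auto simp: matches_replicate_None matches_map_Some)

lemma prob_occurs_at: "prob (occurs_at y i) = word_prob y"
  unfolding occurs_at_eq prob_stake_matches vec_pattern_append vec_pattern_None vec_pattern_Some
  by (simp add: evolve_invariant stat_dist_invariant word_prob_def)

lemma prob_occurs_at_gap: "prob (occurs_at y i \<inter> occurs_at y (i + length y + k))
    = mass (vec_word (evolve k (vec_word p0 y)) y)"
proof -
  define c where "c = (replicate i None @ map Some y) @ (replicate k None @ map Some y)"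
  have "occurs_at y i \<inter> occurs_at y (i + length y + k)
      = {\<omega> \<in> space M. matches c (stake (length c) \<omega>)}"
    unfolding occurs_at_def c_def
    by (simp only: matches_append)
      (auto simp: matches_replicate_None matches_map_Some take_stake min_def ac_simps)
  then have "prob (occurs_at y i \<inter> occurs_at y (i + length y + k)) = mass (vec_pattern p0 c)"
    by (simp only: prob_stake_matches)
  then show ?thesis
    unfolding c_def vec_pattern_append vec_pattern_None vec_pattern_Some
    by (simp add: evolve_invariant stat_dist_invariant)
qed



definition occurrences :: "'a list \<Rightarrow> nat \<Rightarrow> 'a stream \<Rightarrow> real" where
  "occurrences y N \<omega> = (\<Sum>i<N. indicator (occurs_at y i) \<omega>)"

lemma occurrences_measurable[measurable]: "occurrences y N \<in> borel_measurable M"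
  unfolding occurrences_def by measurable

lemma occurrences_nonneg: "0 \<le> occurrences y N \<omega>"
  unfolding occurrences_def by (intro sum_nonneg) simp

lemma mono_occurrences: "mono (\<lambda>N. occurrences y N \<omega>)"
  unfolding occurrences_def by (rule monoI) (auto intro!: sum_mono2)

lemma integrable_indicator_occurs_at[simp]:
  "integrable M (indicator (occurs_at y i \<inter> occurs_at y j) :: 'a stream \<Rightarrow> real)"
  "integrable M (indicator (occurs_at y i) :: 'a stream \<Rightarrow> real)"
  by (intro integrable_real_indicator; simp add: less_top[symmetric] sets.Int)+

lemma word_prob_le_1: "word_prob y \<le> 1"
  using prob_occurs_at[of y 0] prob_le_1[of "occurs_at y 0"] by simp

lemma expectation_occurrences: "expectation (occurrences y N) = real N * word_prob y"
  unfolding occurrences_def by (simp add: Bochner_Integration.integral_sum prob_occurs_at)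

lemma occurrences_centered:
  "(occurrences y N \<omega> - real N * c)^2
    = (\<Sum>i<N. \<Sum>j<N. (indicator (occurs_at y i) \<omega> - c) * (indicator (occurs_at y j) \<omega> - c))"
proof -
  have "occurrences y N \<omega> - real N * c = (\<Sum>i<N. indicator (occurs_at y i) \<omega> - c)"
    unfolding occurrences_def by (simp add: sum_subtractf)
  then show ?thesis by (simp only: power2_eq_square sum_product)
qed

lemma integrable_occurrences_centered:
  "integrable M (\<lambda>\<omega>. (occurrences y N \<omega> - real N * c)^2)"
  unfolding occurrences_centered indicator_centered_product by simp

lemma expectation_occurrences_centered:
  "expectation (\<lambda>\<omega>. (occurrences y N \<omega> - real N * word_prob y)^2)
    = (\<Sum>i<N. \<Sum>j<N. prob (occurs_at y i \<inter> occurs_at y j) - (word_prob y)^2)"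
  unfolding occurrences_centered indicator_centered_product
  by (simp add: Bochner_Integration.integral_sum Bochner_Integration.integral_add
      Bochner_Integration.integral_diff prob_occurs_at prob_space power2_eq_square)

text \<open>Occurrences at least |y| apart are correlated only through the gap between them,
  and these correlations have bounded partial sums; hence the variance grows linearly.\<close>

lemma variance_occurrences_le:
  assumes "y \<noteq> []"
  obtains C where "\<And>N. variance (occurrences y N) \<le> real N * C"
proof -
  obtain B where B: "\<And>K. \<bar>\<Sum>k<K. mass (vec_word (evolve k (vec_word p0 y)) y) - (word_prob y)^2\<bar> \<le> B"
    using bounded_correlation_sums by blast
  define c where "c i j = prob (occurs_at y i \<inter> occurs_at y j) - (word_prob y)^2" for i j
  have "\<bar>\<Sum>i<N. \<Sum>j<N. c i j\<bar> \<le> real N * (2 * real (length y) + 2 * B)" for N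
  proof (rule abs_double_sum_le_of_gap_dependent)
    show "c i j = c j i" for i j unfolding c_def by (simp add: Int_commute)
    show "\<bar>c i j\<bar> \<le> 1" for i j
    proof -
      have "0 \<le> prob (occurs_at y i \<inter> occurs_at y j)" "prob (occurs_at y i \<inter> occurs_at y j) \<le> 1"
        by (auto simp: prob_le_1)
      moreover have "0 \<le> (word_prob y)^2" "(word_prob y)^2 \<le> 1"
        using word_prob_nonneg[of y] word_prob_le_1[of y] by (auto simp: power_le_one)
      ultimately show ?thesis unfolding c_def by linarith
    qed
    show "c i (i + length y + k) = mass (vec_word (evolve k (vec_word p0 y)) y) - (word_prob y)^2"
      for i k unfolding c_def prob_occurs_at_gap ..
    show "1 \<le> length y" using assms by (cases y) auto
  qed (rule B)
  then have "variance (occurrences y N) \<le> real N * (2 * real (length y) + 2 * B)" for N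
    unfolding expectation_occurrences expectation_occurrences_centered c_def
    by (meson abs_le_D1)
  then show ?thesis by (rule that)
qed

theorem AE_occurrences_frequency:
  assumes "y \<noteq> []"
  shows "AE \<omega> in M. (\<lambda>N. occurrences y N \<omega> / real N) \<longlonglongrightarrow> word_prob y"
proof -
  obtain C where "\<And>N. variance (occurrences y N) \<le> real N * C"
    using variance_occurrences_le[OF assms] by blast
  moreover have "integrable M (\<lambda>\<omega>. (occurrences y N \<omega>)^2)" for N
    using integrable_occurrences_centered[of y N 0] by simp
  ultimately show ?thesis
    by (intro AE_LIMSEQ_div_of_linear_variance occurrences_measurable mono_occurrences
        occurrences_nonneg expectation_occurrences)
qed

lemma AE_occurrences_eq_0:
  assumes "word_prob y = 0"
  shows "AE \<omega> in M. \<forall>N. occurrences y N \<omega> = 0"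
proof -
  have "AE \<omega> in M. indicator (occurs_at y i) \<omega> = (0::real)" for i
    using integral_nonneg_eq_0_iff_AE[of M "indicator (occurs_at y i)"] assms
    by (simp add: prob_occurs_at)
  then have "AE \<omega> in M. \<forall>i. indicator (occurs_at y i) \<omega> = (0::real)"
    by (simp add: AE_all_countable)
  then show ?thesis by eventually_elim (simp add: occurrences_def)
qed

end


section \<open>The next-symbol distribution after a synchronizing word\<close>

lemma abs_mixture_minus_row_le:
  fixes w A :: "'i::finite \<Rightarrow> real"
  assumes w_nonneg: "\<And>i. 0 \<le> w i" and w_sum: "(\<Sum>i\<in>UNIV. w i) \<le> 1"
    and A_nonneg: "\<And>i. 0 \<le> A i" and A_le_1: "\<And>i. A i \<le> 1"
  shows "\<bar>(\<Sum>i\<in>UNIV. w i * A i) - A q\<bar> \<le> 1 - w q"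
proof -
  define D where "D = (\<Sum>i\<in>UNIV - {q}. w i * A i)"
  define rest where "rest = (\<Sum>i\<in>UNIV - {q}. w i)"
  have mixture: "(\<Sum>i\<in>UNIV. w i * A i) = w q * A q + D"
    unfolding D_def by (rule sum.remove) auto
  have "(\<Sum>i\<in>UNIV. w i) = w q + rest"
    unfolding rest_def by (rule sum.remove) auto
  then have rest_le: "rest \<le> 1 - w q" and "w q \<le> 1"
    using w_sum sum_nonneg[of "UNIV - {q}" w] w_nonneg unfolding rest_def by auto
  have "0 \<le> D" unfolding D_def by (intro sum_nonneg) (simp add: w_nonneg A_nonneg)
  moreover have "D \<le> rest"
    unfolding D_def rest_def by (intro sum_mono) (simp add: w_nonneg A_le_1 mult_left_le)
  moreover have "(w q - 1) * A q \<le> 0"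
    using \<open>w q \<le> 1\<close> A_nonneg[of q] by (simp add: mult_nonpos_nonneg)
  moreover have "(w q - 1) * 1 \<le> (w q - 1) * A q"
    using \<open>w q \<le> 1\<close> A_le_1[of q] by (intro mult_left_mono_neg) auto
  moreover have "(\<Sum>i\<in>UNIV. w i * A i) - A q = (w q - 1) * A q + D"
    unfolding mixture by (simp add: algebra_simps)
  ultimately show ?thesis using rest_le by (simp add: abs_le_iff)
qed

context pfsa_chain
begin

lemma word_prob_snoc: "word_prob (x @ [\<sigma>]) = (\<Sum>i\<in>UNIV. vec_word p0 x i * pit i \<sigma>)"
proof -
  have "word_prob (x @ [\<sigma>]) = (\<Sum>i\<in>UNIV. vec_word p0 x i * (\<Sum>j\<in>UNIV. G \<sigma> i j))"
    unfolding word_prob_def mass_def vec_word_snoc vecmat_def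
    by (subst sum.swap) (simp add: sum_distrib_left)
  then show ?thesis by (simp add: G_row_sum)
qed

lemma sum_word_prob_snoc: "(\<Sum>\<sigma>\<in>UNIV. word_prob (x @ [\<sigma>])) = word_prob x"
proof -
  have "(\<Sum>\<sigma>\<in>UNIV. word_prob (x @ [\<sigma>])) = (\<Sum>i\<in>UNIV. vec_word p0 x i * (\<Sum>\<sigma>\<in>UNIV. pit i \<sigma>))"
    unfolding word_prob_snoc by (subst sum.swap) (simp add: sum_distrib_left)
  then show ?thesis by (simp add: pit_sum word_prob_def mass_def)
qed

lemma wp_eq: "wp delta pit x = (\<lambda>i. vec_word p0 x i / word_prob x)"
  unfolding wp_def wp_unnorm_eq norm1_wp_unnorm[symmetric] wp_unnorm_eq ..

lemma wp_nonneg: "0 \<le> wp delta pit x i"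
  unfolding wp_eq using vec_word_nonneg[of p0] stat_dist_nonneg word_prob_nonneg by simp

lemma sum_wp_le_1: "(\<Sum>i\<in>UNIV. wp delta pit x i) \<le> 1"
  unfolding wp_eq sum_divide_distrib[symmetric] word_prob_def mass_def[symmetric]
  by (simp add: divide_le_eq_1)

text \<open>This also holds when word_prob x = 0, both sides being 0 by the convention x / 0 = 0.\<close>

lemma word_prob_snoc_div_eq_mixture:
  "word_prob (x @ [\<sigma>]) / word_prob x = (\<Sum>i\<in>UNIV. wp delta pit x i * pit i \<sigma>)"
  unfolding word_prob_snoc wp_eq by (simp add: sum_divide_distrib)

lemma norm_inf_next_symbol_le:
  "norm_inf (\<lambda>\<sigma>. word_prob (x @ [\<sigma>]) / word_prob x - pit q \<sigma>)
    \<le> norm_inf (\<lambda>i. wp delta pit x i - basis_vec q i)"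
proof (rule norm_inf_le)
  fix \<sigma>
  have "\<bar>word_prob (x @ [\<sigma>]) / word_prob x - pit q \<sigma>\<bar> \<le> 1 - wp delta pit x q"
    unfolding word_prob_snoc_div_eq_mixture
    by (rule abs_mixture_minus_row_le) (simp_all add: wp_nonneg sum_wp_le_1 pit_nonneg pit_le_1)
  also have "\<dots> \<le> norm_inf (\<lambda>i. wp delta pit x i - basis_vec q i)"
    using abs_le_norm_inf[of "\<lambda>i. wp delta pit x i - basis_vec q i" q] by (simp add: basis_vec_def)
  finally show "\<bar>word_prob (x @ [\<sigma>]) / word_prob x - pit q \<sigma>\<bar>
      \<le> norm_inf (\<lambda>i. wp delta pit x i - basis_vec q i)" .
qed

end

section \<open>Convergence of the symbolic derivative\<close>

context pfsa_realization
begin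

lemma occ_count_eq_occurrences:
  assumes "y \<noteq> []"
  shows "real (occ_count (stake n \<omega>) y) = occurrences y (n + 1 - length y) \<omega>"
proof -
  have "{i. i + length y \<le> length (stake n \<omega>) \<and> take (length y) (drop i (stake n \<omega>)) = y}
      = {i \<in> {..<n + 1 - length y}. \<omega> \<in> occurs_at y i}"
  proof (intro set_eqI iffI)
    fix i assume "i \<in> {i. i + length y \<le> length (stake n \<omega>) \<and> take (length y) (drop i (stake n \<omega>)) = y}"
    then have "i + length y \<le> n" "drop i (take (length y + i) (stake n \<omega>)) = y"
      by (auto simp: take_drop)
    then show "i \<in> {i \<in> {..<n + 1 - length y}. \<omega> \<in> occurs_at y i}"
      using assms unfolding occurs_at_def space_M
      by (auto simp: take_stake min_def add.commute)
  next
    fix i assume "i \<in> {i \<in> {..<n + 1 - length y}. \<omega> \<in> occurs_at y i}"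
    then have "i + length y \<le> n" "drop i (stake (i + length y) \<omega>) = y"
      using assms unfolding occurs_at_def by (auto simp: Suc_le_eq)
    then show "i \<in> {i. i + length y \<le> length (stake n \<omega>) \<and> take (length y) (drop i (stake n \<omega>)) = y}"
      by (simp add: take_drop take_stake min_def add.commute)
  qed
  then show ?thesis
    unfolding occ_count_def occurrences_def indicator_def
    by (simp add: sum.If_cases Int_def conj_commute lessThan_def)
qed

lemma symb_deriv_eq_occurrences:
  "symb_deriv (stake n \<omega>) x \<sigma>
    = occurrences (x @ [\<sigma>]) (n - length x) \<omega> / (\<Sum>\<sigma>'\<in>UNIV. occurrences (x @ [\<sigma>']) (n - length x) \<omega>)"
  unfolding symb_deriv_def by (simp add: occ_count_eq_occurrences)

lemma AE_symb_deriv_LIMSEQ: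
  "AE \<omega> in M. \<forall>\<sigma>. (\<lambda>n. symb_deriv (stake n \<omega>) x \<sigma>) \<longlonglongrightarrow> word_prob (x @ [\<sigma>]) / word_prob x"
proof (cases "word_prob x = 0")
  case True
  \<comment> \<open>then almost surely no x\<sigma> occurs, and both sides are 0 / 0 = 0\<close>
  then have "word_prob (x @ [\<sigma>]) = 0" for \<sigma>
    using sum_word_prob_snoc[of x] word_prob_nonneg by (simp add: sum_nonneg_eq_0_iff)
  then have "AE \<omega> in M. \<forall>\<sigma>\<in>UNIV. \<forall>N. occurrences (x @ [\<sigma>]) N \<omega> = 0"
    by (intro AE_finite_allI AE_occurrences_eq_0) simp_all
  then show ?thesis
    by eventually_elim (simp add: symb_deriv_eq_occurrences True)
next
  case False
  then have "0 < word_prob x" using word_prob_nonneg[of x] by simp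
  have "AE \<omega> in M. \<forall>\<sigma>\<in>UNIV. (\<lambda>N. occurrences (x @ [\<sigma>]) N \<omega> / real N) \<longlonglongrightarrow> word_prob (x @ [\<sigma>])"
    by (intro AE_finite_allI AE_occurrences_frequency) simp_all
  then show ?thesis
  proof eventually_elim
    case (elim \<omega>)
    define R where "R N \<sigma> = (occurrences (x @ [\<sigma>]) N \<omega> / real N)
        / (\<Sum>\<sigma>'\<in>UNIV. occurrences (x @ [\<sigma>']) N \<omega> / real N)" for N \<sigma>
    have R_eq: "symb_deriv (stake n \<omega>) x \<sigma> = R (n - length x) \<sigma>" for n \<sigma>
      unfolding symb_deriv_eq_occurrences R_def
      by (cases "n - length x = 0") (simp_all add: occurrences_def sum_divide_distrib[symmetric])
    have R_lim: "(\<lambda>N. R N \<sigma>) \<longlonglongrightarrow> word_prob (x @ [\<sigma>]) / word_prob x" for \<sigma>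
      unfolding R_def sum_word_prob_snoc[of x, symmetric]
      using elim \<open>0 < word_prob x\<close> sum_word_prob_snoc[of x] by (intro tendsto_intros) auto
    show ?case
    proof
      fix \<sigma>
      have "(\<lambda>n. R (n - length x) \<sigma>) \<longlonglongrightarrow> word_prob (x @ [\<sigma>]) / word_prob x"
        by (rule filterlim_compose[OF R_lim filterlim_minus_const_nat_at_top])
      then show "(\<lambda>n. symb_deriv (stake n \<omega>) x \<sigma>) \<longlonglongrightarrow> word_prob (x @ [\<sigma>]) / word_prob x"
        by (simp add: R_eq)
    qed
  qed
qed

end

theorem mainTheorem5:
  fixes delta :: "'q::finite \<Rightarrow> 'a::finite \<Rightarrow> 'q"
    and pit :: "'q \<Rightarrow> 'a \<Rightarrow> real"
    and M :: "'a stream measure"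
    and \<epsilon> :: real and x :: "'a list" and q :: 'q
  assumes "pfsa delta pit"
    and "realization_measure delta pit M"
    and "\<epsilon> > 0"
    and "eps_synchronizing delta pit \<epsilon> x"
    and "norm_inf (\<lambda>i. wp delta pit x i - basis_vec q i) \<le> \<epsilon>"
  shows "AE \<omega> in M.
           convergent (\<lambda>n. norm_inf (\<lambda>\<sigma>. symb_deriv (stake n \<omega>) x \<sigma> - pit q \<sigma>)) \<and>
           lim (\<lambda>n. norm_inf (\<lambda>\<sigma>. symb_deriv (stake n \<omega>) x \<sigma> - pit q \<sigma>)) \<le> \<epsilon>"
proof -
  interpret pfsa_realization delta pit M
    using assms(1,2) by (simp add: pfsa_realization_def pfsa_chain_def pfsa_realization_axioms_def)
  have limit_bound: "norm_inf (\<lambda>\<sigma>. word_prob (x @ [\<sigma>]) / word_prob x - pit q \<sigma>) \<le> \<epsilon>"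
    using norm_inf_next_symbol_le[of x q] assms(5) by linarith
  from AE_symb_deriv_LIMSEQ[of x] show ?thesis
  proof eventually_elim
    case (elim \<omega>)
    then have "(\<lambda>n. norm_inf (\<lambda>\<sigma>. symb_deriv (stake n \<omega>) x \<sigma> - pit q \<sigma>))
        \<longlonglongrightarrow> norm_inf (\<lambda>\<sigma>. word_prob (x @ [\<sigma>]) / word_prob x - pit q \<sigma>)"
      by (intro tendsto_norm_inf tendsto_intros) auto
    then show ?case using limit_bound by (auto simp: convergent_def limI)
  qed
qed

end
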